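(* Let $A=(a_{pq})$ be an $m\times m$ coloring matrix. Suppose $I,J\subseteq\{1,\dots,m\}$ are disjoint sets with $|I|=|J|$ such that $\sum_{i\in I}t_A^{(i)}(n)=\sum_{j\in J}t_A^{(j)}(n)$ for all $n$, and that $\ell\in\{1,\dots,m\}$ is a color (possibly in $I$ or $J$) with $a_{\ell i}=0$ for all $i\in I$ and $a_{\ell j}=1$ for all $j\in J$. Let $B=(b_{pq})$ be the $m\times m$ coloring matrix defined by $b_{pq}=1$ if $p=\ell$ and $q\in I$, $b_{pq}=0$ if $p=\ell$ and $q\in J$, and $b_{pq}=a_{pq}$ otherwise. Then $A$ and $B$ are strictly tree coloring equivalent. Furthermore, for all $n\ge1$, $$\sum_{i\in I}t^{(i)}_A(n)=\sum_{j\in J}t^{(j)}_A(n)=\sum_{i\in I}t^{(i)}_{B}(n)=\sum_{j\in J}t^{(j)}_{B}(n).$$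
   Context: A plane tree is an unlabeled rooted tree in which the children of every vertex are linearly ordered. A coloring matrix is an $m\times m$ matrix $A=(a_{ij})$ with entries in $\{0,1\}$. An $A$-coloring of a plane tree assigns to each vertex a color in $\{1,\dots,m\}$ such that whenever a vertex of color $j$ is a child of a vertex of color $i$, $a_{ij}=1$. Let $t_A^{(i)}(n)$ be the number of pairs (plane tree with $n$ vertices, $A$-coloring of it) in which the root has color $i$. Two $m\times m$ coloring matrices $A,B$ are strictly tree coloring equivalent if $t_A^{(i)}(n)=t_B^{(i)}(n)$ for all $n\ge1$ and all $1\le i\le m$. *)

theory Defs
  imports Main
begin

text \<open>A plane tree is a unit-labelled tree; a pair (plane tree, coloring of it) is the same as a
  nat-labelled tree (its shape being the plane tree, the labels being the colors).\<close>
datatype 'a ltree = LNode 'a "'a ltree list"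

type_synonym plane_tree = "unit ltree"

fun root_label :: "'a ltree \<Rightarrow> 'a" where
  "root_label (LNode a ts) = a"

fun num_vertices :: "'a ltree \<Rightarrow> nat" where
  "num_vertices (LNode a ts) = Suc (sum_list (map num_vertices ts))"

fun shape :: "'a ltree \<Rightarrow> plane_tree" where
  "shape (LNode a ts) = LNode () (map shape ts)"

text \<open>A coloring matrix of size m is represented by a function A :: nat => nat => bool on
  indices 1..m, where A i j = True means a_ij = 1.  A colored tree is a valid A-coloring if all
  colors lie in {1..m} and whenever a child of color j has parent of color i, a_ij = 1.\<close>
fun valid_coloring :: "nat \<Rightarrow> (nat \<Rightarrow> nat \<Rightarrow> bool) \<Rightarrow> nat ltree \<Rightarrow> bool" where
  "valid_coloring m A (LNode c ts) \<longleftrightarrow>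
     c \<in> {1..m} \<and>
     (\<forall>t\<in>set ts. A c (root_label t) \<and> valid_coloring m A t)"

definition tcount :: "nat \<Rightarrow> (nat \<Rightarrow> nat \<Rightarrow> bool) \<Rightarrow> nat \<Rightarrow> nat \<Rightarrow> nat" where
  "tcount m A i n = card {T :: nat ltree. num_vertices T = n \<and> valid_coloring m A T \<and> root_label T = i}"

definition strictly_tree_coloring_equivalent ::
  "nat \<Rightarrow> (nat \<Rightarrow> nat \<Rightarrow> bool) \<Rightarrow> (nat \<Rightarrow> nat \<Rightarrow> bool) \<Rightarrow> bool" where
  "strictly_tree_coloring_equivalent m A B \<longleftrightarrow>
     (\<forall>n\<ge>1. \<forall>i\<in>{1..m}. tcount m A i n = tcount m B i n)"

end

theory Submission
  imports Defs
begin

text \<open>Deleting the root of an A-colored tree with root color i leaves a forest whose roots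
  have colors j with a_ij = 1. Hence t_A^(i)(n+1) is determined by the child sums
  s_A^(i)(k) = \<Sum>{t_A^(j)(k) | a_ij = 1}, k \<le> n. Passing from A to B changes only row l, and
  there it changes the child sum by \<Sum>{t_A^(i)(k) | i \<in> I} - \<Sum>{t_A^(j)(k) | j \<in> J} = 0;
  so strong induction on n gives t_A = t_B.\<close>

definition colored_trees :: "nat \<Rightarrow> (nat \<Rightarrow> nat \<Rightarrow> bool) \<Rightarrow> nat set \<Rightarrow> nat \<Rightarrow> nat ltree set" where
  "colored_trees m A R n = {T. num_vertices T = n \<and> valid_coloring m A T \<and> root_label T \<in> R}"

definition colored_forests :: "nat \<Rightarrow> (nat \<Rightarrow> nat \<Rightarrow> bool) \<Rightarrow> nat set \<Rightarrow> nat \<Rightarrow> nat ltree list set" where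
  "colored_forests m A R n = {ts. sum_list (map num_vertices ts) = n \<and>
      (\<forall>t\<in>set ts. valid_coloring m A t \<and> root_label t \<in> R)}"

lemma num_vertices_pos [simp]: "0 < num_vertices T"
  by (cases T) simp

lemma num_vertices_neq_0 [simp]: "num_vertices T \<noteq> 0"
  by simp

lemma length_le_sum_num_vertices: "length ts \<le> sum_list (map num_vertices ts)"
proof (induction ts)
  case (Cons t ts)
  then show ?case
    using num_vertices_pos[of t] by (simp del: num_vertices_pos)
qed simp

lemma num_vertices_le_sum: "t \<in> set ts \<Longrightarrow> num_vertices t \<le> sum_list (map num_vertices ts)"
  by (induction ts) auto

lemma root_label_valid_coloring: "valid_coloring m A T \<Longrightarrow> root_label T \<in> {1..m}"
  by (cases T) simp

lemma colored_forests_0: "colored_forests m A R 0 = {[]}"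
proof -
  have "ts = []" if "sum_list (map num_vertices ts) = 0" for ts
    using that length_le_sum_num_vertices[of ts] by simp
  then show ?thesis
    by (auto simp: colored_forests_def)
qed

lemma colored_forests_Suc:
  "colored_forests m A R (Suc n) =
     (\<Union>k\<in>{1..Suc n}. (\<lambda>(t, ts). t # ts) ` (colored_trees m A R k \<times> colored_forests m A R (Suc n - k)))"
proof
  show "colored_forests m A R (Suc n) \<subseteq>
      (\<Union>k\<in>{1..Suc n}. (\<lambda>(t, ts). t # ts) ` (colored_trees m A R k \<times> colored_forests m A R (Suc n - k)))"
  proof
    fix ts assume ts: "ts \<in> colored_forests m A R (Suc n)"
    then obtain t ts' where ts_Cons: "ts = t # ts'"
      by (cases ts) (auto simp: colored_forests_def)
    have "num_vertices t \<in> {1..Suc n}"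
      using ts ts_Cons by (auto simp: colored_forests_def Suc_le_eq)
    moreover have "(t, ts') \<in> colored_trees m A R (num_vertices t) \<times>
        colored_forests m A R (Suc n - num_vertices t)"
      using ts ts_Cons by (auto simp: colored_forests_def colored_trees_def)
    ultimately show "ts \<in> (\<Union>k\<in>{1..Suc n}. (\<lambda>(t, ts). t # ts) `
        (colored_trees m A R k \<times> colored_forests m A R (Suc n - k)))"
      using ts_Cons by force
  qed
qed (auto simp: colored_forests_def colored_trees_def)

lemma colored_trees_root_Suc:
  "{T. num_vertices T = Suc n \<and> valid_coloring m A T \<and> root_label T = i} =
     (if i \<in> {1..m} then LNode i ` colored_forests m A {j. A i j} n else {})"
proof (cases "i \<in> {1..m}")
  case True
  have "T \<in> LNode i ` colored_forests m A {j. A i j} n"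
    if "num_vertices T = Suc n" "valid_coloring m A T" "root_label T = i" for T
    using that by (cases T) (auto simp: colored_forests_def)
  then show ?thesis
    using True by (auto simp: colored_forests_def)
qed (use root_label_valid_coloring in fastforce)

lemma finite_valid_colorings: "finite {T. num_vertices T \<le> n \<and> valid_coloring m A T}"
proof (induction n)
  case 0
  then show ?case by simp
next
  case (Suc n)
  let ?small = "{T. num_vertices T \<le> n \<and> valid_coloring m A T}"
  have "{T. num_vertices T \<le> Suc n \<and> valid_coloring m A T} \<subseteq>
      ?small \<union> (\<lambda>(i, ts). LNode i ts) ` ({1..m} \<times> {ts. set ts \<subseteq> ?small \<and> length ts \<le> n})"
  proof
    fix T assume T: "T \<in> {T. num_vertices T \<le> Suc n \<and> valid_coloring m A T}"
    obtain i ts where T_eq: "T = LNode i ts"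
      by (cases T)
    have "t \<in> ?small" if "t \<in> set ts" "num_vertices T = Suc n" for t
      using T that T_eq num_vertices_le_sum[of t ts] by auto
    moreover have "length ts \<le> n" if "num_vertices T = Suc n"
      using that T_eq length_le_sum_num_vertices[of ts] by simp
    ultimately show "T \<in> ?small \<union> (\<lambda>(i, ts). LNode i ts) `
        ({1..m} \<times> {ts. set ts \<subseteq> ?small \<and> length ts \<le> n})"
      using T T_eq by (cases "num_vertices T = Suc n") auto
  qed
  then show ?case
    using Suc.IH finite_lists_length_le[of ?small n] by (blast intro: finite_subset)
qed

lemma finite_colored_trees: "finite (colored_trees m A R n)"
  by (rule finite_subset[OF _ finite_valid_colorings[of n m A]]) (auto simp: colored_trees_def)

lemma finite_colored_forests: "finite (colored_forests m A R n)"
proof (rule finite_subset)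
  show "colored_forests m A R n \<subseteq>
      {ts. set ts \<subseteq> {T. num_vertices T \<le> n \<and> valid_coloring m A T} \<and> length ts \<le> n}"
    using num_vertices_le_sum length_le_sum_num_vertices
    by (fastforce simp: colored_forests_def)
qed (simp add: finite_lists_length_le finite_valid_colorings)

lemma card_colored_forests_Suc:
  "card (colored_forests m A R (Suc n)) =
     (\<Sum>k=1..Suc n. card (colored_trees m A R k) * card (colored_forests m A R (Suc n - k)))"
proof -
  have Cons_inj: "inj_on (\<lambda>(t, ts). t # ts) X" for X :: "(nat ltree \<times> nat ltree list) set"
    by (auto simp: inj_on_def)
  have "card (colored_forests m A R (Suc n)) =
      (\<Sum>k=1..Suc n. card ((\<lambda>(t, ts). t # ts) ` (colored_trees m A R k \<times> colored_forests m A R (Suc n - k))))"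
    unfolding colored_forests_Suc
    by (rule card_UN_disjoint)
      (use finite_colored_trees finite_colored_forests in \<open>auto simp: colored_trees_def\<close>)
  then show ?thesis
    by (simp add: card_image[OF Cons_inj] card_cartesian_product)
qed

lemma card_colored_forests_eqI:
  assumes "\<And>k. k \<in> {1..n} \<Longrightarrow> card (colored_trees m A R k) = card (colored_trees m' B R' k)"
  shows "card (colored_forests m A R n) = card (colored_forests m' B R' n)"
  using assms
proof (induction n rule: less_induct)
  case (less n)
  show ?case
  proof (cases n)
    case 0
    then show ?thesis by (simp add: colored_forests_0)
  next
    case (Suc n')
    have "card (colored_forests m A R (Suc n' - k)) = card (colored_forests m' B R' (Suc n' - k))"
      if "k \<in> {1..Suc n'}" for k
      using that less.prems Suc by (intro less.IH) auto
    then show ?thesis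
      unfolding Suc card_colored_forests_Suc using less.prems Suc by (intro sum.cong) auto
  qed
qed

lemma card_colored_trees: "card (colored_trees m A R n) = (\<Sum>j\<in>R \<inter> {1..m}. tcount m A j n)"
proof -
  have "colored_trees m A R n =
      (\<Union>j\<in>R \<inter> {1..m}. {T. num_vertices T = n \<and> valid_coloring m A T \<and> root_label T = j})"
    using root_label_valid_coloring by (auto simp: colored_trees_def)
  moreover have "finite {T. num_vertices T = n \<and> valid_coloring m A T \<and> root_label T = j}" for j
    using finite_colored_trees[of m A "{j}" n] by (simp add: colored_trees_def)
  ultimately show ?thesis
    unfolding tcount_def by (simp add: card_UN_disjoint disjoint_iff)
qed

lemma tcount_0: "tcount m A i 0 = 0"
  by (simp add: tcount_def)

lemma tcount_Suc:
  "tcount m A i (Suc n) = (if i \<in> {1..m} then card (colored_forests m A {j. A i j} n) else 0)"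
  unfolding tcount_def colored_trees_root_Suc by (simp add: card_image inj_on_def)

lemma tcount_eqI:
  assumes child_sums: "\<And>i k. i \<in> {1..m} \<Longrightarrow>
    (\<Sum>j\<in>{j. A i j} \<inter> {1..m}. tcount m A j k) = (\<Sum>j\<in>{j. B i j} \<inter> {1..m}. tcount m A j k)"
  shows "tcount m A i n = tcount m B i n"
proof (induction n arbitrary: i rule: less_induct)
  case (less n)
  show ?case
  proof (cases n)
    case 0
    then show ?thesis by (simp add: tcount_0)
  next
    case (Suc n')
    have "card (colored_forests m A {j. A i j} n') = card (colored_forests m B {j. B i j} n')"
      if i: "i \<in> {1..m}"
    proof (rule card_colored_forests_eqI)
      fix k assume "k \<in> {1..n'}"
      then have "k < n" using Suc by simp
      have "card (colored_trees m A {j. A i j} k) = (\<Sum>j\<in>{j. A i j} \<inter> {1..m}. tcount m A j k)"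
        by (rule card_colored_trees)
      also have "\<dots> = (\<Sum>j\<in>{j. B i j} \<inter> {1..m}. tcount m A j k)"
        using child_sums i .
      also have "\<dots> = (\<Sum>j\<in>{j. B i j} \<inter> {1..m}. tcount m B j k)"
        using less.IH \<open>k < n\<close> by simp
      also have "\<dots> = card (colored_trees m B {j. B i j} k)"
        by (rule card_colored_trees[symmetric])
      finally show "card (colored_trees m A {j. A i j} k) = card (colored_trees m B {j. B i j} k)" .
    qed
    then show ?thesis
      unfolding Suc tcount_Suc by simp
  qed
qed

lemma sum_replace_subset:
  fixes f :: "'a \<Rightarrow> 'b::comm_monoid_add"
  assumes "finite R" "finite I" "J \<subseteq> R" "I \<inter> R = {}" "sum f I = sum f J"
  shows "sum f ((R - J) \<union> I) = sum f R"
proof -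
  have "sum f ((R - J) \<union> I) = sum f (R - J) + sum f I"
    using assms(1,2,4) by (intro sum.union_disjoint) auto
  also have "\<dots> = sum f (R - J) + sum f J"
    using assms(5) by simp
  also have "\<dots> = sum f R"
    using assms(1,3) by (simp add: sum.subset_diff[of J R])
  finally show ?thesis .
qed

theorem theorem15:
  fixes m :: nat and A B :: "nat \<Rightarrow> nat \<Rightarrow> bool" and I J :: "nat set" and l :: nat
  assumes "I \<subseteq> {1..m}" and "J \<subseteq> {1..m}" and "I \<inter> J = {}" and "card I = card J"
    and "\<forall>n. (\<Sum>i\<in>I. tcount m A i n) = (\<Sum>j\<in>J. tcount m A j n)"
    and "l \<in> {1..m}"
    and "\<forall>i\<in>I. \<not> A l i" and "\<forall>j\<in>J. A l j"
    and "\<forall>p q. B p q = (if p = l \<and> q \<in> I then True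
                        else if p = l \<and> q \<in> J then False else A p q)"
  shows "strictly_tree_coloring_equivalent m A B \<and>
    (\<forall>n\<ge>1. (\<Sum>i\<in>I. tcount m A i n) = (\<Sum>j\<in>J. tcount m A j n) \<and>
            (\<Sum>j\<in>J. tcount m A j n) = (\<Sum>i\<in>I. tcount m B i n) \<and>
            (\<Sum>i\<in>I. tcount m B i n) = (\<Sum>j\<in>J. tcount m B j n))"
proof -
  have "(\<Sum>j\<in>{j. A i j} \<inter> {1..m}. tcount m A j k) = (\<Sum>j\<in>{j. B i j} \<inter> {1..m}. tcount m A j k)"
    for i k
  proof (cases "i = l")
    case True
    then have "{j. B i j} \<inter> {1..m} = ({j. A i j} \<inter> {1..m} - J) \<union> I"
      using assms(1,9) by auto
    moreover have "(\<Sum>j\<in>({j. A i j} \<inter> {1..m} - J) \<union> I. tcount m A j k) =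
        (\<Sum>j\<in>{j. A i j} \<inter> {1..m}. tcount m A j k)"
      using True assms(1,2,5,7,8) by (intro sum_replace_subset) (auto intro: finite_subset)
    ultimately show ?thesis by simp
  qed (use assms(9) in simp)
  then have "tcount m A i n = tcount m B i n" for i n
    by (rule tcount_eqI)
  then show ?thesis
    unfolding strictly_tree_coloring_equivalent_def using assms(5) by simp
qed

end
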